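(* Let $q$ be a prime power, let $\mathcal{F}=(\mathcal{F}_1,\ldots,\mathcal{F}_r)$ be a flag on $\mathbb{F}_{q^n}$ and let $\beta\in\mathbb{F}_{q^n}^*$. The following are equivalent: (1) $\mathrm{Orb}_\beta(\mathcal{F})$ is a disjoint flag code; (2) $\mathrm{Stab}_\beta(\mathcal{F})=\mathrm{Stab}_\beta(\mathcal{F}_1)=\cdots=\mathrm{Stab}_\beta(\mathcal{F}_r)$; (3) $\mathrm{Stab}_\beta(\mathcal{F}_1)=\cdots=\mathrm{Stab}_\beta(\mathcal{F}_r)$.
   Context: A flag on $\mathbb{F}_{q^n}$ is a sequence $(\mathcal{F}_1,\ldots,\mathcal{F}_r)$ of $\mathbb{F}_q$-subspaces with $\{0\}\subsetneq\mathcal{F}_1\subsetneq\cdots\subsetneq\mathcal{F}_r\subsetneq\mathbb{F}_{q^n}$. For $\beta\in\mathbb{F}_{q^n}^*$ of multiplicative order $|\beta|$, $\mathcal{U}\beta=\{u\beta:u\in\mathcal{U}\}$, $\mathcal{F}\beta=(\mathcal{F}_1\beta,\ldots,\mathcal{F}_r\beta)$, $\mathrm{Orb}_\beta(\mathcal{F})=\{\mathcal{F}\beta^j:0\le j\le|\beta|-1\}$, $\mathrm{Stab}_\beta(\mathcal{U})=\{\gamma\in\langle\beta\rangle:\mathcal{U}\gamma=\mathcal{U}\}$ and $\mathrm{Stab}_\beta(\mathcal{F})=\{\gamma\in\langle\beta\rangle:\mathcal{F}\gamma=\mathcal{F}\}$. For a set $\mathcal{C}$ of flags of type $(t_1,\ldots,t_r)$,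 its $i$-th projected code $\mathcal{C}_i$ is the set of $i$-th subspaces of its flags; $\mathcal{C}$ is disjoint if $|\mathcal{C}_1|=\cdots=|\mathcal{C}_r|=|\mathcal{C}|$. *)

theory Defs
  imports "HOL-Computational_Algebra.Primes"
begin

text \<open>The ambient field is a finite field type 'a with q^n elements; its subfield
  F_q is the set of elements fixed by the Frobenius x \<mapsto> x^q.\<close>

definition prime_power :: "nat \<Rightarrow> bool" where
  "prime_power q \<longleftrightarrow> (\<exists>p k. prime p \<and> k > 0 \<and> q = p ^ k)"

definition subfield_Fq :: "nat \<Rightarrow> 'a::field set" where
  "subfield_Fq q = {x. x ^ q = x}"

definition Fq_subspace :: "nat \<Rightarrow> 'a::field set \<Rightarrow> bool" where
  "Fq_subspace q U \<longleftrightarrow> 0 \<in> U \<and> (\<forall>u\<in>U. \<forall>v\<in>U. u + v \<in> U)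
     \<and> (\<forall>c\<in>subfield_Fq q. \<forall>u\<in>U. c * u \<in> U)"

text \<open>A flag (F_1,...,F_r), r \<ge> 1, is a list; F_i is  F ! (i-1).\<close>
definition is_flag :: "nat \<Rightarrow> 'a::field set list \<Rightarrow> bool" where
  "is_flag q F \<longleftrightarrow> F \<noteq> [] \<and> (\<forall>i<length F. Fq_subspace q (F ! i))
     \<and> {0} \<subset> F ! 0
     \<and> (\<forall>i. Suc i < length F \<longrightarrow> F ! i \<subset> F ! Suc i)
     \<and> last F \<subset> UNIV"

definition mult_order :: "'a::field \<Rightarrow> nat" where
  "mult_order \<beta> = (LEAST k. k > 0 \<and> \<beta> ^ k = 1)"

definition cyc :: "'a::field \<Rightarrow> 'a set" where
  "cyc \<beta> = range (\<lambda>j::nat. \<beta> ^ j)"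

definition smul_set :: "'a::field set \<Rightarrow> 'a \<Rightarrow> 'a set" where
  "smul_set U \<gamma> = (\<lambda>u. u * \<gamma>) ` U"

definition smul_flag :: "'a::field set list \<Rightarrow> 'a \<Rightarrow> 'a set list" where
  "smul_flag F \<gamma> = map (\<lambda>U. smul_set U \<gamma>) F"

definition Orb :: "'a::field \<Rightarrow> 'a set list \<Rightarrow> 'a set list set" where
  "Orb \<beta> F = {smul_flag F (\<beta> ^ j) | j. j \<le> mult_order \<beta> - 1}"

definition Stab_set :: "'a::field \<Rightarrow> 'a set \<Rightarrow> 'a set" where
  "Stab_set \<beta> U = {\<gamma> \<in> cyc \<beta>. smul_set U \<gamma> = U}"

definition Stab_flag :: "'a::field \<Rightarrow> 'a set list \<Rightarrow> 'a set" where
  "Stab_flag \<beta> F = {\<gamma> \<in> cyc \<beta>. smul_flag F \<gamma> = F}"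

definition projected_code :: "'a set list set \<Rightarrow> nat \<Rightarrow> 'a set set" where
  "projected_code C i = (\<lambda>G. G ! i) ` C"

definition disjoint_flag_code :: "nat \<Rightarrow> 'a set list set \<Rightarrow> bool" where
  "disjoint_flag_code r C \<longleftrightarrow> (\<forall>i<r. card (projected_code C i) = card C)"

end

theory Submission
  imports Defs
begin

text \<open>The orbit of \<open>\<F>\<close> is the image of the cyclic group \<open>\<langle>\<beta>\<rangle>\<close> under \<open>\<gamma> \<mapsto> \<F>\<gamma>\<close>,
  and two of its flags \<open>\<F>\<beta>\<^sup>j\<close>, \<open>\<F>\<beta>\<^sup>k\<close> (\<open>j \<le> k\<close>) have the same \<open>i\<close>-th subspace exactly when
  \<open>\<beta>\<^sup>k\<^sup>-\<^sup>j\<close> stabilises \<open>\<F>\<^sub>i\<close>. So the \<open>i\<close>-th projection is injective on the orbit iff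
  \<open>Stab(\<F>\<^sub>i) \<subseteq> Stab(\<F>)\<close>; as \<open>Stab(\<F>)\<close> is the intersection of the \<open>Stab(\<F>\<^sub>i)\<close>, all three
  conditions say that these stabilisers coincide.\<close>

lemma smul_set_mult: "smul_set U (a * b) = smul_set (smul_set U a) b"
  unfolding smul_set_def by (auto simp: image_image mult.assoc)

lemma smul_set_one [simp]: "smul_set U 1 = U"
  unfolding smul_set_def by simp

lemma inj_smul_set:
  fixes \<gamma> :: "'a::field"
  assumes "\<gamma> \<noteq> 0"
  shows "inj (\<lambda>U. smul_set U \<gamma>)"
proof (rule injI)
  fix U V assume "smul_set U \<gamma> = smul_set V \<gamma>"
  then have "smul_set U (\<gamma> * inverse \<gamma>) = smul_set V (\<gamma> * inverse \<gamma>)"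
    by (simp add: smul_set_mult)
  then show "U = V" using assms by simp
qed

lemma smul_flag_nth: "i < length F \<Longrightarrow> smul_flag F \<gamma> ! i = smul_set (F ! i) \<gamma>"
  unfolding smul_flag_def by simp

lemma smul_flag_one [simp]: "smul_flag F 1 = F"
  unfolding smul_flag_def by simp

lemma smul_flag_eq_self_iff: "smul_flag F \<gamma> = F \<longleftrightarrow> (\<forall>i<length F. smul_set (F ! i) \<gamma> = F ! i)"
  unfolding smul_flag_def by (simp add: list_eq_iff_nth_eq)

lemma smul_flag_eq_iff_div:
  fixes \<gamma> :: "'a::field"
  assumes "\<gamma> \<noteq> 0"
  shows "smul_flag F \<gamma> = smul_flag F \<delta> \<longleftrightarrow> smul_flag F (\<delta> / \<gamma>) = F"
proof -
  have "smul_flag F \<delta> = smul_flag (smul_flag F (\<delta> / \<gamma>)) \<gamma>"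
    using assms by (simp add: smul_flag_def smul_set_mult[symmetric])
  then show ?thesis
    using inj_map_eq_map[OF inj_smul_set[OF assms]] unfolding smul_flag_def by metis
qed

lemma smul_set_eq_iff_div:
  fixes \<gamma> :: "'a::field"
  assumes "\<gamma> \<noteq> 0"
  shows "smul_set U \<gamma> = smul_set U \<delta> \<longleftrightarrow> smul_set U (\<delta> / \<gamma>) = U"
  using smul_flag_eq_iff_div[OF assms, of "[U]"] by (simp add: smul_flag_def)

lemma ex_power_eq_one:
  fixes \<beta> :: "'a::{field,finite}"
  assumes "\<beta> \<noteq> 0"
  shows "\<exists>k>0. \<beta> ^ k = 1"
proof -
  have "\<not> inj (\<lambda>j::nat. \<beta> ^ j)"
    using finite_imageD[of "\<lambda>j::nat. \<beta> ^ j" UNIV] by auto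
  then obtain j k :: nat where "j < k" and "\<beta> ^ j = \<beta> ^ k"
    by (metis injI linorder_neqE_nat)
  then have "\<beta> ^ j * \<beta> ^ (k - j) = \<beta> ^ j * 1"
    by (metis less_imp_le_nat le_add_diff_inverse mult_1_right power_add)
  then have "\<beta> ^ (k - j) = 1"
    using assms by simp
  with \<open>j < k\<close> show ?thesis
    by (intro exI[of _ "k - j"]) simp
qed

lemma mult_order_pos_and_power:
  fixes \<beta> :: "'a::{field,finite}"
  assumes "\<beta> \<noteq> 0"
  shows "0 < mult_order \<beta> \<and> \<beta> ^ mult_order \<beta> = 1"
  unfolding mult_order_def by (rule LeastI_ex[OF ex_power_eq_one[OF assms]])

lemma cyc_eq_powers_lessThan:
  fixes \<beta> :: "'a::field"
  assumes "0 < m" and "\<beta> ^ m = 1"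
  shows "cyc \<beta> = (\<lambda>j. \<beta> ^ j) ` {..<m}"
proof
  show "cyc \<beta> \<subseteq> (\<lambda>j. \<beta> ^ j) ` {..<m}"
  proof
    fix \<gamma> assume "\<gamma> \<in> cyc \<beta>"
    then obtain k where "\<gamma> = \<beta> ^ k"
      unfolding cyc_def by blast
    also have "\<dots> = \<beta> ^ (m * (k div m) + k mod m)"
      by simp
    also have "\<dots> = (\<beta> ^ m) ^ (k div m) * \<beta> ^ (k mod m)"
      by (simp only: power_add power_mult)
    also have "\<dots> = \<beta> ^ (k mod m)"
      using assms(2) by simp
    finally show "\<gamma> \<in> (\<lambda>j. \<beta> ^ j) ` {..<m}"
      using assms(1) by simp
  qed
qed (auto simp: cyc_def)

lemma Orb_eq_image_cyc:
  fixes \<beta> :: "'a::field"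
  assumes "0 < mult_order \<beta>" and "\<beta> ^ mult_order \<beta> = 1"
  shows "Orb \<beta> F = (\<lambda>\<gamma>. smul_flag F \<gamma>) ` cyc \<beta>"
proof -
  have "Orb \<beta> F = (\<lambda>j. smul_flag F (\<beta> ^ j)) ` {..<mult_order \<beta>}"
    unfolding Orb_def using assms(1) by (auto simp: less_Suc_eq_le)
  then show ?thesis
    by (simp add: cyc_eq_powers_lessThan[OF assms] image_image)
qed

lemma inj_on_nth_orbit_iff_Stab_set_subset:
  fixes \<beta> :: "'a::field"
  assumes "\<beta> \<noteq> 0" and "i < length F"
  shows "inj_on (\<lambda>G. G ! i) ((\<lambda>\<gamma>. smul_flag F \<gamma>) ` cyc \<beta>)
           \<longleftrightarrow> Stab_set \<beta> (F ! i) \<subseteq> Stab_flag \<beta> F"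
proof
  assume inj: "inj_on (\<lambda>G. G ! i) ((\<lambda>\<gamma>. smul_flag F \<gamma>) ` cyc \<beta>)"
  show "Stab_set \<beta> (F ! i) \<subseteq> Stab_flag \<beta> F"
  proof
    fix \<gamma> assume \<gamma>: "\<gamma> \<in> Stab_set \<beta> (F ! i)"
    have "smul_flag F \<gamma> = smul_flag F 1"
    proof (rule inj_onD[OF inj])
      show "smul_flag F \<gamma> ! i = smul_flag F 1 ! i"
        using \<gamma> assms(2) by (simp add: Stab_set_def smul_flag_nth)
      show "smul_flag F \<gamma> \<in> (\<lambda>\<gamma>. smul_flag F \<gamma>) ` cyc \<beta>"
        using \<gamma> by (simp add: Stab_set_def)
      show "smul_flag F 1 \<in> (\<lambda>\<gamma>. smul_flag F \<gamma>) ` cyc \<beta>"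
        unfolding cyc_def by (metis power_0 rangeI image_eqI)
    qed
    then show "\<gamma> \<in> Stab_flag \<beta> F"
      using \<gamma> by (simp add: Stab_set_def Stab_flag_def)
  qed
next
  assume sub: "Stab_set \<beta> (F ! i) \<subseteq> Stab_flag \<beta> F"
  have shift: "smul_flag F (\<beta> ^ j) = smul_flag F (\<beta> ^ k)"
    if "j \<le> k" and "smul_set (F ! i) (\<beta> ^ j) = smul_set (F ! i) (\<beta> ^ k)" for j k
  proof -
    have quotient: "\<beta> ^ k / \<beta> ^ j = \<beta> ^ (k - j)"
      using assms(1) \<open>j \<le> k\<close> by (simp add: power_diff)
    have "\<beta> ^ (k - j) \<in> Stab_set \<beta> (F ! i)"
      using that(2) assms(1) unfolding Stab_set_def cyc_def
      by (simp add: smul_set_eq_iff_div quotient)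
    with sub have "smul_flag F (\<beta> ^ k / \<beta> ^ j) = F"
      by (auto simp: Stab_flag_def quotient)
    then show ?thesis
      using assms(1) by (simp add: smul_flag_eq_iff_div)
  qed
  show "inj_on (\<lambda>G. G ! i) ((\<lambda>\<gamma>. smul_flag F \<gamma>) ` cyc \<beta>)"
  proof (rule inj_onI)
    fix G H
    assume "G \<in> (\<lambda>\<gamma>. smul_flag F \<gamma>) ` cyc \<beta>" "H \<in> (\<lambda>\<gamma>. smul_flag F \<gamma>) ` cyc \<beta>"
    then obtain j k where G: "G = smul_flag F (\<beta> ^ j)" and H: "H = smul_flag F (\<beta> ^ k)"
      unfolding cyc_def by auto
    assume "G ! i = H ! i"
    then have "smul_set (F ! i) (\<beta> ^ j) = smul_set (F ! i) (\<beta> ^ k)"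
      using assms(2) by (simp add: G H smul_flag_nth)
    then show "G = H"
      unfolding G H using shift by (metis nle_le)
  qed
qed

lemma Stab_flag_eq_INT_Stab_set:
  assumes "F \<noteq> []"
  shows "Stab_flag \<beta> F = (\<Inter>i<length F. Stab_set \<beta> (F ! i))"
  using assms unfolding Stab_flag_def Stab_set_def smul_flag_eq_self_iff by auto

lemma disjoint_flag_code_iff_inj_on:
  assumes "finite C"
  shows "disjoint_flag_code r C \<longleftrightarrow> (\<forall>i<r. inj_on (\<lambda>G. G ! i) C)"
  unfolding disjoint_flag_code_def projected_code_def
  using assms by (meson card_image eq_card_imp_inj_on)

theorem proposition4p18:
  fixes q n :: nat and F :: "'a::{field,finite} set list" and \<beta> :: 'a
  assumes "prime_power q" and "n \<ge> 1" and "card (UNIV :: 'a set) = q ^ n"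
    and "is_flag q F" and "\<beta> \<noteq> 0"
  shows "(disjoint_flag_code (length F) (Orb \<beta> F)
            \<longleftrightarrow> (\<forall>i<length F. Stab_flag \<beta> F = Stab_set \<beta> (F ! i)))
       \<and> ((\<forall>i<length F. Stab_flag \<beta> F = Stab_set \<beta> (F ! i))
            \<longleftrightarrow> (\<forall>i<length F. Stab_set \<beta> (F ! i) = Stab_set \<beta> (F ! 0)))"
proof -
  have "F \<noteq> []"
    using \<open>is_flag q F\<close> by (simp add: is_flag_def)
  then have Stab_flag: "Stab_flag \<beta> F = (\<Inter>i<length F. Stab_set \<beta> (F ! i))"
    by (rule Stab_flag_eq_INT_Stab_set)
  have orbit: "Orb \<beta> F = (\<lambda>\<gamma>. smul_flag F \<gamma>) ` cyc \<beta>"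
    using mult_order_pos_and_power[OF \<open>\<beta> \<noteq> 0\<close>] by (simp add: Orb_eq_image_cyc)
  have "disjoint_flag_code (length F) (Orb \<beta> F)
          \<longleftrightarrow> (\<forall>i<length F. Stab_set \<beta> (F ! i) \<subseteq> Stab_flag \<beta> F)"
    unfolding orbit disjoint_flag_code_iff_inj_on[OF finite_imageI[OF finite]]
    using inj_on_nth_orbit_iff_Stab_set_subset[OF \<open>\<beta> \<noteq> 0\<close>] by blast
  moreover have "(\<forall>i<length F. Stab_set \<beta> (F ! i) \<subseteq> Stab_flag \<beta> F)
                   \<longleftrightarrow> (\<forall>i<length F. Stab_flag \<beta> F = Stab_set \<beta> (F ! i))"
    unfolding Stab_flag by blast
  moreover have "(\<forall>i<length F. Stab_flag \<beta> F = Stab_set \<beta> (F ! i))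
                   \<longleftrightarrow> (\<forall>i<length F. Stab_set \<beta> (F ! i) = Stab_set \<beta> (F ! 0))"
    using \<open>F \<noteq> []\<close> unfolding Stab_flag by (auto simp: INT_constant)
  ultimately show ?thesis by blast
qed

end
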